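(* Let $A_n=S_n\wr\mathrm{Aut}(\mathcal{T}_d)$, $\rho_n:A_n\to S_n$, $\sigma(f_1,\dots,f_n)\mapsto\sigma$, and $\kappa_k^n:A_n\to A_{n+d-1}$ ($1\le k\le n$) the maps defined in the context. Then each $\kappa_k^n$ is injective and the following hold for all $n$, all $g,h\in A_n$ and all $1\le k<\ell\le n$: (C1) $(gh)\kappa_k^n=(g)\kappa^n_{\rho_n(h)(k)}\,(h)\kappa_k^n$ (for all $1\le k\le n$); (C2) $((g)\kappa_\ell^n)\kappa_k^{n+d-1}=((g)\kappa_k^n)\kappa_{\ell+d-1}^{n+d-1}$; (C3) $\rho_{n+d-1}((g)\kappa_k^n)(i)=((\rho_n(g))\varsigma_k^n)(i)$ for all $i\notin\{k,k+1,\dots,k+d-1\}$. That is, $((A_n)_n,(\rho_n)_n,(\kappa_k^n)_{k\le n})$ is a $d$-ary cloning system.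
   Context: $d\ge2$, $\mathcal{T}_d$ is the rooted $d$-ary tree on words over $X=\{1,\dots,d\}$. Permutations act on the left ($\sigma\tau$ = first $\tau$, then $\sigma$). $S_n\wr G=S_n\ltimes G^n$ with elements $\sigma(g_1,\dots,g_n)$ and product $\sigma(f_1,\dots,f_n)\tau(g_1,\dots,g_n)=\sigma\tau(f_{\tau(1)}g_1,\dots,f_{\tau(n)}g_n)$. Each $f\in\mathrm{Aut}(\mathcal{T}_d)$ has a unique wreath recursion $f=\rho(f)(f^1,\dots,f^d)$ with $\rho(f)\in S_d$, $f^x\in\mathrm{Aut}(\mathcal{T}_d)$ and $f(xw)=\rho(f)(x)f^x(w)$. For $\sigma\in S_n$ and $1\le k\le n$, $(\sigma)\varsigma_k^n\in S_{n+d-1}$ is: for $i<k$, $i\mapsto\sigma(i)$ if $\sigma(i)<\sigma(k)$, $i\mapsto\sigma(i)+d-1$ if $\sigma(i)>\sigma(k)$; for $k\le i\le k+d-1$, $i\mapsto\sigma(k)+i-k$; for $i>k+d-1$, $i\mapsto\sigma(i-d+1)$ if $\sigma(i-d+1)<\sigma(k)$ and $i\mapsto\sigma(i-d+1)+d-1$ if $\sigma(i-d+1)>\sigma(k)$. For $\tau\in S_d$ let $\tau^{(k)}\in S_{n+d-1}$ send $k+j-1\mapsto k+\tau(j)-1$ ($1\le j\le d$) and fix other points. Define $(\sigma(f_1,\dots,f_n))\kappa_k^n=(\sigma)\varsigma_k^n\,\rho(f_k)^{(k)}\,(f_1,\dots,f_{k-1},f_k^1,\dots,f_k^d,f_{k+1},\dots,f_n)\in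 A_{n+d-1}$, where $f_k=\rho(f_k)(f_k^1,\dots,f_k^d)$. *)

theory Defs
  imports "HOL-Combinatorics.Permutations" "HOL-Library.Sublist"
begin

text \<open>Vertices of the d-ary tree: words over X = {1..d}.\<close>
definition words :: "nat \<Rightarrow> nat list set" where
  "words d = {w. set w \<subseteq> {1..d}}"

text \<open>Automorphisms of the rooted d-ary tree, represented as functions on nat lists
  that are the identity outside the vertex set (canonical representatives).\<close>
definition is_aut :: "nat \<Rightarrow> (nat list \<Rightarrow> nat list) \<Rightarrow> bool" where
  "is_aut d f \<longleftrightarrow> bij_betw f (words d) (words d)
     \<and> (\<forall>w\<in>words d. length (f w) = length w)
     \<and> (\<forall>u\<in>words d. \<forall>v\<in>words d. prefix u v \<longrightarrow> prefix (f u) (f v))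
     \<and> (\<forall>w. w \<notin> words d \<longrightarrow> f w = w)"

text \<open>Wreath recursion f = rho(f)(f^1,...,f^d), with f(xw) = rho(f)(x) f^x(w).\<close>
definition rho_aut :: "nat \<Rightarrow> (nat list \<Rightarrow> nat list) \<Rightarrow> nat \<Rightarrow> nat" where
  "rho_aut d f = (\<lambda>x. if x \<in> {1..d} then hd (f [x]) else x)"

definition sect :: "nat \<Rightarrow> (nat list \<Rightarrow> nat list) \<Rightarrow> nat \<Rightarrow> nat list \<Rightarrow> nat list" where
  "sect d f x = (\<lambda>w. if w \<in> words d then tl (f (x # w)) else w)"

text \<open>An element sigma(f_1,...,f_n) is a pair (sigma, fs); sigma permutes {1..n}
  (identity elsewhere), fs i is an automorphism for i in {1..n} and id elsewhere.
  Permutations act on the left, composition is function composition.\<close>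
type_synonym wr_elem = "(nat \<Rightarrow> nat) \<times> (nat \<Rightarrow> nat list \<Rightarrow> nat list)"

definition A :: "nat \<Rightarrow> nat \<Rightarrow> wr_elem set" where
  "A d n = {(\<sigma>, fs). \<sigma> permutes {1..n} \<and> (\<forall>i\<in>{1..n}. is_aut d (fs i))
                       \<and> (\<forall>i. i \<notin> {1..n} \<longrightarrow> fs i = id)}"

definition wr_mult :: "wr_elem \<Rightarrow> wr_elem \<Rightarrow> wr_elem" where
  "wr_mult g h = (fst g \<circ> fst h, \<lambda>i. snd g (fst h i) \<circ> snd h i)"

definition rho_n :: "wr_elem \<Rightarrow> nat \<Rightarrow> nat" where
  "rho_n g = fst g"

definition varsigma :: "nat \<Rightarrow> nat \<Rightarrow> nat \<Rightarrow> (nat \<Rightarrow> nat) \<Rightarrow> nat \<Rightarrow> nat" where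
  "varsigma d n k \<sigma> = (\<lambda>i.
     if 1 \<le> i \<and> i < k then (if \<sigma> i < \<sigma> k then \<sigma> i else \<sigma> i + d - 1)
     else if k \<le> i \<and> i \<le> k + d - 1 then \<sigma> k + i - k
     else if k + d - 1 < i \<and> i \<le> n + d - 1 then
       (if \<sigma> (i - d + 1) < \<sigma> k then \<sigma> (i - d + 1) else \<sigma> (i - d + 1) + d - 1)
     else i)"

definition tau_at :: "nat \<Rightarrow> nat \<Rightarrow> (nat \<Rightarrow> nat) \<Rightarrow> nat \<Rightarrow> nat" where
  "tau_at d k \<tau> = (\<lambda>i. if k \<le> i \<and> i \<le> k + d - 1 then k + \<tau> (i - k + 1) - 1 else i)"

definition kappa :: "nat \<Rightarrow> nat \<Rightarrow> nat \<Rightarrow> wr_elem \<Rightarrow> wr_elem" where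
  "kappa d n k g = (case g of (\<sigma>, fs) \<Rightarrow>
     (varsigma d n k \<sigma> \<circ> tau_at d k (rho_aut d (fs k)),
      \<lambda>i. if 1 \<le> i \<and> i < k then fs i
          else if k \<le> i \<and> i \<le> k + d - 1 then sect d (fs k) (i - k + 1)
          else if k + d - 1 < i \<and> i \<le> n + d - 1 then fs (i - d + 1)
          else id))"

end

theory Submission
  imports Defs
begin

text \<open>An element of \<open>A\<^sub>n\<close> is determined by its entries \<open>(\<sigma> i, f\<^sub>i)\<close>, and
  \<open>\<kappa>\<^sub>k\<close> replaces position \<open>k\<close> by the block \<open>k, \<dots>, k + d - 1\<close>, carrying the sections
  \<open>f\<^sub>k\<^sup>x\<close> permuted by the root action \<open>\<rho>(f\<^sub>k)\<close>, while every other position \<open>j\<close> is merely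
  shifted past the block. All cloning-system identities are therefore checked entrywise: on the
  block they reduce to the wreath recursion of a product, \<open>\<rho>(fg) = \<rho>(f)\<rho>(g)\<close> and
  \<open>(fg)\<^sup>x = f\<^bsup>\<rho>(g)(x)\<^esup>g\<^sup>x\<close>, and off the block to arithmetic of the shift.
  Injectivity holds because \<open>\<sigma> k\<close> and \<open>f\<^sub>k\<close> can be read off the block, as \<open>f\<^sub>k\<close> is
  determined by its root action and its sections.\<close>

section \<open>Automorphisms of the d-ary tree\<close>

lemma words_Nil [simp]: "[] \<in> words d"
  by (simp add: words_def)

lemma words_Cons [simp]: "x # w \<in> words d \<longleftrightarrow> x \<in> {1..d} \<and> w \<in> words d"
  by (auto simp: words_def)

lemma is_aut_Nil: "is_aut d f \<Longrightarrow> f [] = []"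
  unfolding is_aut_def by (metis length_0_conv words_Nil)

lemma is_aut_Cons:
  assumes f: "is_aut d f" and x: "x \<in> {1..d}" and w: "w \<in> words d"
  shows "f (x # w) = rho_aut d f x # sect d f x w \<and> rho_aut d f x \<in> {1..d} \<and> sect d f x w \<in> words d"
proof -
  have xw: "[x] \<in> words d" "x # w \<in> words d" using x w by auto
  have "f [x] \<in> words d" "f (x # w) \<in> words d"
    using f xw unfolding is_aut_def by (auto dest: bij_betwE)
  moreover obtain z where z: "f [x] = [z]"
  proof -
    have "length (f [x]) = 1" using f xw unfolding is_aut_def by fastforce
    then show ?thesis using that by (cases "f [x]") auto
  qed
  moreover obtain r where "f (x # w) = z # r"
  proof -
    have "prefix (f [x]) (f (x # w))" using f xw unfolding is_aut_def by fastforce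
    then show ?thesis using that z by (auto simp: prefix_def)
  qed
  ultimately show ?thesis using x w by (simp add: rho_aut_def sect_def)
qed

lemma is_aut_singleton:
  assumes f: "is_aut d f" and x: "x \<in> {1..d}"
  shows "f [x] = [rho_aut d f x]"
proof -
  have "length (f [x]) = 1" using f x unfolding is_aut_def by fastforce
  then show ?thesis using is_aut_Cons[OF f x words_Nil] by (cases "f [x]") auto
qed

lemma rho_aut_permutes:
  assumes f: "is_aut d f"
  shows "rho_aut d f permutes {1..d}"
proof (rule inj_imp_permutes)
  show "inj_on (rho_aut d f) {1..d}"
  proof (rule inj_onI)
    fix x y assume x: "x \<in> {1..d}" and y: "y \<in> {1..d}" and "rho_aut d f x = rho_aut d f y"
    then have "f [x] = f [y]" using is_aut_singleton[OF f] by simp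
    moreover have "inj_on f (words d)" using f by (simp add: is_aut_def bij_betw_def)
    ultimately show "x = y" using x y by (auto dest: inj_onD)
  qed
  show "rho_aut d f x \<in> {1..d}" if "x \<in> {1..d}" for x
    using is_aut_Cons[OF f that words_Nil] by simp
qed (auto simp: rho_aut_def)

lemma is_aut_sect:
  assumes f: "is_aut d f" and x: "x \<in> {1..d}"
  shows "is_aut d (sect d f x)"
proof -
  have bij: "bij_betw f (words d) (words d)" using f by (simp add: is_aut_def)
  note cons = is_aut_Cons[OF f x]
  have inj: "inj_on (sect d f x) (words d)"
  proof (rule inj_onI)
    fix u v assume u: "u \<in> words d" and v: "v \<in> words d" and "sect d f x u = sect d f x v"
    then have "f (x # u) = f (x # v)" using cons by simp
    then show "u = v" using bij u v x by (auto simp: bij_betw_def dest: inj_onD)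
  qed
  have surj: "sect d f x ` words d = words d"
  proof
    show "sect d f x ` words d \<subseteq> words d" using cons by auto
    show "words d \<subseteq> sect d f x ` words d"
    proof
      fix v assume v: "v \<in> words d"
      have "rho_aut d f x # v \<in> words d"
        using v permutes_in_image[OF rho_aut_permutes[OF f]] x by simp
      then obtain y where y: "y \<in> words d" "f y = rho_aut d f x # v"
        using bij by (metis bij_betw_def imageE)
      then obtain z w where zw: "y = z # w" using is_aut_Nil[OF f] by (cases y) auto
      with y have z: "z \<in> {1..d}" "w \<in> words d" by auto
      with y zw have "rho_aut d f z = rho_aut d f x" "sect d f z w = v"
        using is_aut_Cons[OF f] by auto
      moreover from this have "z = x"
        using permutes_inj[OF rho_aut_permutes[OF f]] by (simp add: inj_eq)
      ultimately show "v \<in> sect d f x ` words d" using z by auto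
    qed
  qed
  have len: "\<forall>w\<in>words d. length (sect d f x w) = length w"
  proof
    fix w assume w: "w \<in> words d"
    have "length (f (x # w)) = length (x # w)" using f w x unfolding is_aut_def by simp
    then show "length (sect d f x w) = length w" using cons[OF w] by simp
  qed
  have pre: "\<forall>u\<in>words d. \<forall>v\<in>words d. prefix u v \<longrightarrow> prefix (sect d f x u) (sect d f x v)"
  proof (intro ballI impI)
    fix u v assume u: "u \<in> words d" and v: "v \<in> words d" and "prefix u v"
    then have "prefix (f (x # u)) (f (x # v))" using f x unfolding is_aut_def by simp
    then show "prefix (sect d f x u) (sect d f x v)" using cons[OF u] cons[OF v] by simp
  qed
  show ?thesis unfolding is_aut_def using inj surj len pre
    by (auto simp: bij_betw_def sect_def)
qed

lemma is_aut_unfold: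
  assumes f: "is_aut d f"
  shows "f w = (if w \<in> words d then case w of [] \<Rightarrow> [] | x # v \<Rightarrow> rho_aut d f x # sect d f x v else w)"
  using f is_aut_Nil[OF f] is_aut_Cons[OF f] unfolding is_aut_def by (cases w) auto

lemma is_aut_eqI:
  assumes f: "is_aut d f" and g: "is_aut d g"
    and "\<And>x. x \<in> {1..d} \<Longrightarrow> rho_aut d f x = rho_aut d g x"
    and "\<And>x. x \<in> {1..d} \<Longrightarrow> sect d f x = sect d g x"
  shows "f = g"
proof
  fix w show "f w = g w"
    using assms by (subst is_aut_unfold[OF f], subst is_aut_unfold[OF g]) (auto split: list.split)
qed

lemma is_aut_comp: "is_aut d f \<Longrightarrow> is_aut d g \<Longrightarrow> is_aut d (f \<circ> g)"
  unfolding is_aut_def by (auto intro: bij_betw_trans dest: bij_betwE)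

lemma rho_aut_comp:
  assumes f: "is_aut d f" and g: "is_aut d g" and x: "x \<in> {1..d}"
  shows "rho_aut d (f \<circ> g) x = rho_aut d f (rho_aut d g x)"
proof -
  have "rho_aut d g x \<in> {1..d}" using x permutes_in_image[OF rho_aut_permutes[OF g]] by simp
  then have "(f \<circ> g) [x] = [rho_aut d f (rho_aut d g x)]"
    using is_aut_singleton[OF g x] is_aut_singleton[OF f] by simp
  then show ?thesis using x by (simp add: rho_aut_def)
qed

lemma sect_comp:
  assumes f: "is_aut d f" and g: "is_aut d g" and x: "x \<in> {1..d}"
  shows "sect d (f \<circ> g) x = sect d f (rho_aut d g x) \<circ> sect d g x"
proof
  fix w show "sect d (f \<circ> g) x w = (sect d f (rho_aut d g x) \<circ> sect d g x) w"
  proof (cases "w \<in> words d")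
    case True
    then show ?thesis
      using is_aut_Cons[OF g x True] is_aut_Cons[OF f, of "rho_aut d g x" "sect d g x w"]
      by (simp add: sect_def[of d "f \<circ> g"])
  qed (simp add: sect_def)
qed

text \<open>The position of \<open>j \<noteq> k\<close> after position \<open>k\<close> has been expanded to the block
  \<open>{k..k + d - 1}\<close>.\<close>
definition clone_pos :: "nat \<Rightarrow> nat \<Rightarrow> nat \<Rightarrow> nat" where
  "clone_pos d k j = (if j < k then j else j + d - 1)"

lemma clone_pos_inj: "1 \<le> d \<Longrightarrow> clone_pos d a b = clone_pos d a c \<Longrightarrow> b = c"
  by (auto simp: clone_pos_def split: if_splits)

lemma clone_pos_in_range:
  "1 \<le> d \<Longrightarrow> b \<in> {1..n} \<Longrightarrow> clone_pos d a b \<in> {1..n + d - 1}"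
  by (auto simp: clone_pos_def)

lemma clone_pos_block_shift:
  "1 \<le> d \<Longrightarrow> a \<noteq> b \<Longrightarrow> r \<in> {1..d} \<Longrightarrow>
    clone_pos d (clone_pos d a b) (a + r - 1) = clone_pos d b a + r - 1"
  by (auto simp: clone_pos_def)

lemma clone_pos_swap:
  "1 \<le> d \<Longrightarrow> a \<noteq> b \<Longrightarrow> a \<noteq> c \<Longrightarrow> b \<noteq> c \<Longrightarrow>
    clone_pos d (clone_pos d b a) (clone_pos d b c) = clone_pos d (clone_pos d a b) (clone_pos d a c)"
  by (auto simp: clone_pos_def)

lemma clone_positions_cases [consumes 4, case_names block clone]:
  assumes "1 \<le> d" "1 \<le> k" "k \<le> n" "i \<in> {1..n + d - 1}"
  obtains (block) x where "x \<in> {1..d}" "i = k + x - 1"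
  | (clone) j where "j \<in> {1..n}" "j \<noteq> k" "i = clone_pos d k j"
proof -
  consider "i < k" | "k \<le> i" "i \<le> k + d - 1" | "k + d - 1 < i" by linarith
  then show ?thesis
  proof cases
    case 1
    then show ?thesis using clone[of i] assms by (auto simp: clone_pos_def)
  next
    case 2
    then show ?thesis using block[of "i - k + 1"] assms by auto
  next
    case 3
    then have "i - d + 1 \<in> {1..n}" "i - d + 1 \<noteq> k" "i = clone_pos d k (i - d + 1)"
      using assms by (auto simp: clone_pos_def)
    then show ?thesis by (rule clone)
  qed
qed

lemma kappa_clone_pos:
  assumes "1 \<le> d" "1 \<le> k" "k \<le> n" "j \<in> {1..n}" "j \<noteq> k"
  shows "fst (kappa d n k (\<sigma>, fs)) (clone_pos d k j) = clone_pos d (\<sigma> k) (\<sigma> j)"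
    and "snd (kappa d n k (\<sigma>, fs)) (clone_pos d k j) = fs j"
proof -
  consider "j < k" | "k < j" using assms by linarith
  then have "fst (kappa d n k (\<sigma>, fs)) (clone_pos d k j) = clone_pos d (\<sigma> k) (\<sigma> j)
      \<and> snd (kappa d n k (\<sigma>, fs)) (clone_pos d k j) = fs j"
  proof cases
    case 1
    then show ?thesis using assms by (simp add: kappa_def varsigma_def tau_at_def clone_pos_def)
  next
    case 2
    then have "clone_pos d k j = j + d - 1" "\<not> j + d - 1 < k" "\<not> j + d - 1 \<le> k + d - 1"
      "j + d - 1 \<le> n + d - 1" "j + d - 1 - d + 1 = j"
      using assms by (auto simp: clone_pos_def)
    then show ?thesis by (simp add: kappa_def varsigma_def tau_at_def clone_pos_def)
  qed
  then show "fst (kappa d n k (\<sigma>, fs)) (clone_pos d k j) = clone_pos d (\<sigma> k) (\<sigma> j)"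
    and "snd (kappa d n k (\<sigma>, fs)) (clone_pos d k j) = fs j" by auto
qed

lemma kappa_block:
  assumes f: "is_aut d (fs k)" and k: "1 \<le> k" and x: "x \<in> {1..d}"
  shows "fst (kappa d n k (\<sigma>, fs)) (k + x - 1) = \<sigma> k + rho_aut d (fs k) x - 1"
    and "snd (kappa d n k (\<sigma>, fs)) (k + x - 1) = sect d (fs k) x"
proof -
  define r where "r = rho_aut d (fs k) x"
  have "r \<in> {1..d}" unfolding r_def
    using x permutes_in_image[OF rho_aut_permutes[OF f]] by simp
  then have "\<not> k + x - 1 < k" "k + x - 1 \<le> k + d - 1" "k + x - 1 - k + 1 = x"
    "\<not> k + r - 1 < k" "k + r - 1 \<le> k + d - 1" "\<sigma> k + (k + r - 1) - k = \<sigma> k + r - 1"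
    using k x by auto
  then show "fst (kappa d n k (\<sigma>, fs)) (k + x - 1) = \<sigma> k + rho_aut d (fs k) x - 1"
    and "snd (kappa d n k (\<sigma>, fs)) (k + x - 1) = sect d (fs k) x"
    by (simp_all add: kappa_def varsigma_def tau_at_def r_def)
qed

lemma mem_A_iff:
  "(\<sigma>, fs) \<in> A d n \<longleftrightarrow> \<sigma> permutes {1..n} \<and> (\<forall>i\<in>{1..n}. is_aut d (fs i))
     \<and> (\<forall>i. i \<notin> {1..n} \<longrightarrow> fs i = id)"
  by (simp add: A_def)

definition wr_entry :: "wr_elem \<Rightarrow> nat \<Rightarrow> nat \<times> (nat list \<Rightarrow> nat list)" where
  "wr_entry g i = (fst g i, snd g i)"

lemma A_eqI:
  assumes d: "1 \<le> d" and k: "1 \<le> k" "k \<le> n"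
    and g: "g \<in> A d (n + d - 1)" and h: "h \<in> A d (n + d - 1)"
    and block: "\<And>x. x \<in> {1..d} \<Longrightarrow> wr_entry g (k + x - 1) = wr_entry h (k + x - 1)"
    and clone: "\<And>j. j \<in> {1..n} \<Longrightarrow> j \<noteq> k \<Longrightarrow> wr_entry g (clone_pos d k j) = wr_entry h (clone_pos d k j)"
  shows "g = h"
proof -
  have "wr_entry g i = wr_entry h i" for i
  proof (cases "i \<in> {1..n + d - 1}")
    case True
    then show ?thesis by (rule clone_positions_cases[OF d k]) (use block clone in auto)
  next
    case False
    moreover obtain \<sigma> fs \<tau> gs where "g = (\<sigma>, fs)" "h = (\<tau>, gs)" by fastforce
    ultimately show ?thesis using g h unfolding wr_entry_def
      by (metis mem_A_iff fst_conv snd_conv permutes_not_in)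
  qed
  then show ?thesis by (simp add: prod_eq_iff fun_eq_iff wr_entry_def)
qed

section \<open>The cloning maps\<close>

lemma kappa_outside:
  assumes "1 \<le> k" "k \<le> n" "i \<notin> {1..n + d - 1}"
  shows "fst (kappa d n k (\<sigma>, fs)) i = i" and "snd (kappa d n k (\<sigma>, fs)) i = id"
proof -
  have "\<not> (1 \<le> i \<and> i < k)" "\<not> (k \<le> i \<and> i \<le> k + d - 1)" "\<not> (k + d - 1 < i \<and> i \<le> n + d - 1)"
    using assms by auto
  then show "fst (kappa d n k (\<sigma>, fs)) i = i" and "snd (kappa d n k (\<sigma>, fs)) i = id"
    by (simp_all only: kappa_def varsigma_def tau_at_def case_prod_conv fst_conv snd_conv comp_apply if_False)
qed

lemma image_fst_kappa:
  assumes d: "1 \<le> d" and k: "1 \<le> k" "k \<le> n" and g: "(\<sigma>, fs) \<in> A d n"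
  shows "fst (kappa d n k (\<sigma>, fs)) ` {1..n + d - 1} = {1..n + d - 1}"
proof -
  have \<sigma>: "\<sigma> permutes {1..n}" and fk: "is_aut d (fs k)" using g k by (auto simp: mem_A_iff)
  define p where "p = fst (kappa d n k (\<sigma>, fs))"
  have \<sigma>k: "\<sigma> k \<in> {1..n}" using k permutes_in_image[OF \<sigma>] by simp
  note \<rho> = rho_aut_permutes[OF fk]
  have "p ` {1..n + d - 1} \<subseteq> {1..n + d - 1}"
  proof clarify
    fix i assume i: "i \<in> {1..n + d - 1}"
    show "p i \<in> {1..n + d - 1}"
      using d k i proof (cases rule: clone_positions_cases)
      case (block x)
      then have "p i = \<sigma> k + rho_aut d (fs k) x - 1"
        using kappa_block(1)[where fs = fs, OF fk k(1)] by (simp add: p_def)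
      then show ?thesis using block \<sigma>k permutes_in_image[OF \<rho>, of x] by auto
    next
      case (clone j)
      then have "p i = clone_pos d (\<sigma> k) (\<sigma> j)" by (simp add: p_def kappa_clone_pos[OF d k])
      moreover have "\<sigma> j \<in> {1..n}" using clone(1) permutes_in_image[OF \<sigma>] by simp
      ultimately show ?thesis using clone_pos_in_range[OF d] by metis
    qed
  qed
  moreover have "{1..n + d - 1} \<subseteq> p ` {1..n + d - 1}"
  proof
    fix t assume t: "t \<in> {1..n + d - 1}"
    have \<sigma>k': "1 \<le> \<sigma> k" "\<sigma> k \<le> n" using \<sigma>k by auto
    show "t \<in> p ` {1..n + d - 1}"
      using d \<sigma>k' t proof (cases rule: clone_positions_cases)
      case (block y)
      then obtain x where x: "x \<in> {1..d}" "rho_aut d (fs k) x = y"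
        using permutes_image[OF \<rho>] by (metis imageE)
      then have "t = p (k + x - 1)"
        using block kappa_block(1)[where fs = fs, OF fk k(1) x(1)] by (simp add: p_def)
      moreover have "k + x - 1 \<in> {1..n + d - 1}" using x k by auto
      ultimately show ?thesis by blast
    next
      case (clone m)
      then obtain j where j: "j \<in> {1..n}" "\<sigma> j = m"
        using permutes_image[OF \<sigma>] by (metis imageE)
      with clone have "j \<noteq> k" by auto
      with j clone have "t = p (clone_pos d k j)" by (simp add: p_def kappa_clone_pos[OF d k])
      moreover have "clone_pos d k j \<in> {1..n + d - 1}" by (rule clone_pos_in_range[OF d j(1)])
      ultimately show ?thesis by blast
    qed
  qed
  ultimately show ?thesis by (auto simp: p_def)
qed

lemma kappa_permutes:
  assumes d: "1 \<le> d" and k: "1 \<le> k" "k \<le> n" and g: "(\<sigma>, fs) \<in> A d n"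
  shows "fst (kappa d n k (\<sigma>, fs)) permutes {1..n + d - 1}"
proof (rule bij_imp_permutes)
  show "bij_betw (fst (kappa d n k (\<sigma>, fs))) {1..n + d - 1} {1..n + d - 1}"
    using image_fst_kappa[OF assms] by (simp add: bij_betw_def finite_surj_inj)
qed (simp add: kappa_outside[OF k])

lemma kappa_in_A:
  assumes d: "1 \<le> d" and k: "1 \<le> k" "k \<le> n" and g: "g \<in> A d n"
  shows "kappa d n k g \<in> A d (n + d - 1)"
proof -
  obtain \<sigma> fs where g_eq: "g = (\<sigma>, fs)" by fastforce
  have \<sigma>: "\<sigma> permutes {1..n}" and fs: "\<And>i. i \<in> {1..n} \<Longrightarrow> is_aut d (fs i)"
    using g by (auto simp: g_eq mem_A_iff)
  have fk: "is_aut d (fs k)" using fs k by simp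
  have "is_aut d (snd (kappa d n k (\<sigma>, fs)) i)" if i: "i \<in> {1..n + d - 1}" for i
  using d k i proof (cases rule: clone_positions_cases)
    case (block x)
    then show ?thesis using kappa_block(2)[where fs = fs, OF fk k(1)] is_aut_sect[OF fk] by simp
  next
    case (clone j)
    then show ?thesis by (simp add: kappa_clone_pos[OF d k] fs)
  qed
  moreover have "snd (kappa d n k (\<sigma>, fs)) i = id" if "i \<notin> {1..n + d - 1}" for i
    using kappa_outside(2)[OF k that] .
  ultimately show ?thesis using kappa_permutes[OF d k g[unfolded g_eq]] unfolding g_eq
    by (cases "kappa d n k (\<sigma>, fs)") (simp add: mem_A_iff)
qed

lemma kappa_inj_on:
  assumes d: "1 \<le> d" and k: "1 \<le> k" "k \<le> n"
  shows "inj_on (kappa d n k) (A d n)"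
proof (rule inj_onI)
  fix g g' assume g: "g \<in> A d n" and g': "g' \<in> A d n" and eq: "kappa d n k g = kappa d n k g'"
  obtain \<sigma> fs \<sigma>' fs' where g_eq: "g = (\<sigma>, fs)" and g'_eq: "g' = (\<sigma>', fs')" by fastforce
  have \<sigma>: "\<sigma> permutes {1..n}" "\<sigma>' permutes {1..n}"
    and fs: "\<And>i. i \<in> {1..n} \<Longrightarrow> is_aut d (fs i) \<and> is_aut d (fs' i)"
    and fs_out: "\<And>i. i \<notin> {1..n} \<Longrightarrow> fs i = fs' i"
    using g g' by (auto simp: g_eq g'_eq mem_A_iff)
  have fk: "is_aut d (fs k)" "is_aut d (fs' k)" using fs k by auto
  note \<rho> = rho_aut_permutes[OF fk(1)] rho_aut_permutes[OF fk(2)]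
  have block: "\<sigma> k + rho_aut d (fs k) x - 1 = \<sigma>' k + rho_aut d (fs' k) x - 1
      \<and> sect d (fs k) x = sect d (fs' k) x" if x: "x \<in> {1..d}" for x
    using arg_cong[OF eq, of "\<lambda>g. fst g (k + x - 1)"] arg_cong[OF eq, of "\<lambda>g. snd g (k + x - 1)"]
      kappa_block[where fs = fs, OF fk(1) k(1) x] kappa_block[where fs = fs', OF fk(2) k(1) x]
    by (simp add: g_eq g'_eq)
  \<comment> \<open>\<open>\<sigma> k\<close> is the least value on the block, attained where \<open>\<rho>(fs k)\<close> takes the value 1\<close>
  have "\<sigma> k = \<sigma>' k"
  proof -
    have one: "1 \<in> {1..d}" using d by simp
    obtain x x' where x: "x \<in> {1..d}" "rho_aut d (fs k) x = 1"
      and x': "x' \<in> {1..d}" "rho_aut d (fs' k) x' = 1"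
      using permutes_image[OF \<rho>(1)] permutes_image[OF \<rho>(2)] one by (metis imageE)
    have "\<sigma>' k \<le> \<sigma> k" using block[OF x(1)] x permutes_in_image[OF \<rho>(2), of x] by auto
    moreover have "\<sigma> k \<le> \<sigma>' k" using block[OF x'(1)] x' permutes_in_image[OF \<rho>(1), of x'] by auto
    ultimately show ?thesis by simp
  qed
  moreover have "\<sigma> j = \<sigma>' j" if "j \<in> {1..n}" "j \<noteq> k" for j
    using eq kappa_clone_pos(1)[OF d k that] clone_pos_inj[OF d] \<open>\<sigma> k = \<sigma>' k\<close>
    by (metis g_eq g'_eq)
  ultimately have "\<sigma> = \<sigma>'"
    using permutes_not_in[OF \<sigma>(1)] permutes_not_in[OF \<sigma>(2)] by (metis ext)
  moreover have "fs k = fs' k"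
  proof (rule is_aut_eqI[OF fk])
    fix x assume x: "x \<in> {1..d}"
    show "rho_aut d (fs k) x = rho_aut d (fs' k) x"
      using block[OF x] \<open>\<sigma> k = \<sigma>' k\<close> permutes_in_image[OF \<rho>(1), of x]
        permutes_in_image[OF \<rho>(2), of x] x by auto
    show "sect d (fs k) x = sect d (fs' k) x" using block[OF x] by simp
  qed
  moreover have "fs j = fs' j" if "j \<in> {1..n}" "j \<noteq> k" for j
    using eq kappa_clone_pos(2)[OF d k that] by (metis g_eq g'_eq)
  ultimately have "\<sigma> = \<sigma>' \<and> fs = fs'" using fs_out by (metis ext)
  then show "g = g'" by (simp add: g_eq g'_eq)
qed

lemma wr_mult_in_A:
  assumes "g \<in> A d n" "h \<in> A d n"
  shows "wr_mult g h \<in> A d n"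
  using assms permutes_compose[of "fst h" "{1..n}" "fst g"] permutes_in_image[of "fst h" "{1..n}"]
    permutes_not_in[of "fst h" "{1..n}"]
  by (cases g, cases h) (auto simp: wr_mult_def mem_A_iff intro: is_aut_comp)

lemma kappa_wr_mult:
  assumes d: "1 \<le> d" and k: "1 \<le> k" "k \<le> n" and g: "g \<in> A d n" and h: "h \<in> A d n"
  shows "kappa d n k (wr_mult g h) = wr_mult (kappa d n (rho_n h k) g) (kappa d n k h)"
proof -
  obtain \<sigma> f \<tau> e where g_eq: "g = (\<sigma>, f)" and h_eq: "h = (\<tau>, e)" by fastforce
  have \<tau>: "\<tau> permutes {1..n}" and f: "\<And>i. i \<in> {1..n} \<Longrightarrow> is_aut d (f i)"
    and ek: "is_aut d (e k)" using g h k by (auto simp: g_eq h_eq mem_A_iff)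
  define a where "a = \<tau> k"
  have a: "1 \<le> a" "a \<le> n" using k permutes_in_image[OF \<tau>, of k] by (auto simp: a_def)
  have fa: "is_aut d (f a)" using f a by simp
  have fe: "is_aut d (f (\<tau> k) \<circ> e k)" using is_aut_comp[OF fa ek] by (simp add: a_def)
  show ?thesis
  proof (rule A_eqI[OF d k])
    show "kappa d n k (wr_mult g h) \<in> A d (n + d - 1)"
      by (rule kappa_in_A[OF d k wr_mult_in_A[OF g h]])
    show "wr_mult (kappa d n (rho_n h k) g) (kappa d n k h) \<in> A d (n + d - 1)"
      using kappa_in_A[OF d a g] kappa_in_A[OF d k h]
      by (simp add: wr_mult_in_A h_eq rho_n_def a_def)
  next
    fix x assume x: "x \<in> {1..d}"
    define r where "r = rho_aut d (e k) x"
    have r: "r \<in> {1..d}" using x permutes_in_image[OF rho_aut_permutes[OF ek]] by (simp add: r_def)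
    show "wr_entry (kappa d n k (wr_mult g h)) (k + x - 1)
      = wr_entry (wr_mult (kappa d n (rho_n h k) g) (kappa d n k h)) (k + x - 1)"
      using kappa_block[where fs = "\<lambda>i. f (\<tau> i) \<circ> e i", OF fe k(1) x]
        kappa_block[where fs = e, OF ek k(1) x] kappa_block[where fs = f, OF fa a(1) r]
        rho_aut_comp[OF fa ek x] sect_comp[OF fa ek x]
      by (simp add: g_eq h_eq wr_entry_def wr_mult_def rho_n_def a_def r_def)
  next
    fix j assume j: "j \<in> {1..n}" "j \<noteq> k"
    have "\<tau> j \<in> {1..n}" "\<tau> j \<noteq> a"
      using j permutes_in_image[OF \<tau>] permutes_inj[OF \<tau>] by (auto simp: a_def inj_eq)
    then show "wr_entry (kappa d n k (wr_mult g h)) (clone_pos d k j)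
      = wr_entry (wr_mult (kappa d n (rho_n h k) g) (kappa d n k h)) (clone_pos d k j)"
      using kappa_clone_pos[OF d k j] kappa_clone_pos[OF d a]
      by (simp add: g_eq h_eq wr_entry_def wr_mult_def rho_n_def a_def comp_def)
  qed
qed

lemma rho_n_kappa:
  assumes "1 \<le> k" "i \<notin> {k..k + d - 1}"
  shows "rho_n (kappa d n k g) i = varsigma d n k (rho_n g) i"
  using assms by (cases g) (auto simp: kappa_def rho_n_def tau_at_def)

context
  fixes d n k l :: nat and \<sigma> :: "nat \<Rightarrow> nat" and fs :: "nat \<Rightarrow> nat list \<Rightarrow> nat list"
  assumes d: "1 \<le> d" and kl: "1 \<le> k" "k < l" "l \<le> n" and g: "(\<sigma>, fs) \<in> A d n"
begin

lemma kappa_at_other_cloned_point: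
  shows "wr_entry (kappa d n l (\<sigma>, fs)) k = (clone_pos d (\<sigma> l) (\<sigma> k), fs k)"
    and "wr_entry (kappa d n k (\<sigma>, fs)) (l + d - 1) = (clone_pos d (\<sigma> k) (\<sigma> l), fs l)"
proof -
  have "clone_pos d l k = k" "clone_pos d k l = l + d - 1" using kl by (auto simp: clone_pos_def)
  then show "wr_entry (kappa d n l (\<sigma>, fs)) k = (clone_pos d (\<sigma> l) (\<sigma> k), fs k)"
    and "wr_entry (kappa d n k (\<sigma>, fs)) (l + d - 1) = (clone_pos d (\<sigma> k) (\<sigma> l), fs l)"
    using kappa_clone_pos[OF d, of l n k \<sigma> fs] kappa_clone_pos[OF d, of k n l \<sigma> fs] kl
    by (auto simp: wr_entry_def)
qed

lemma kappa_kappa_at_block: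
  assumes x: "x \<in> {1..d}"
  shows "wr_entry (kappa d (n + d - 1) k (kappa d n l (\<sigma>, fs))) (k + x - 1)
    = wr_entry (kappa d (n + d - 1) (l + d - 1) (kappa d n k (\<sigma>, fs))) (k + x - 1)"
proof -
  obtain \<pi> F \<pi>' F' where G: "kappa d n l (\<sigma>, fs) = (\<pi>, F)" and G': "kappa d n k (\<sigma>, fs) = (\<pi>', F')"
    by fastforce
  have \<sigma>_kl: "\<sigma> k \<noteq> \<sigma> l" using g kl by (auto simp: mem_A_iff inj_eq dest: permutes_inj)
  have fsk: "is_aut d (fs k)" using g kl by (simp add: mem_A_iff)
  define r where "r = rho_aut d (fs k) x"
  have r: "r \<in> {1..d}" using x permutes_in_image[OF rho_aut_permutes[OF fsk]] by (simp add: r_def)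
  have \<pi>_k: "\<pi> k = clone_pos d (\<sigma> l) (\<sigma> k)" "F k = fs k"
    and \<pi>'_l: "\<pi>' (l + d - 1) = clone_pos d (\<sigma> k) (\<sigma> l)"
    using kappa_at_other_cloned_point G G' by (simp_all add: wr_entry_def)
  have pos: "k + x - 1 \<in> {1..n + d - 1}" "k + x - 1 \<noteq> l + d - 1"
    "clone_pos d (l + d - 1) (k + x - 1) = k + x - 1"
    using x kl by (auto simp: clone_pos_def)
  have lhs: "wr_entry (kappa d (n + d - 1) k (\<pi>, F)) (k + x - 1)
      = (clone_pos d (\<sigma> l) (\<sigma> k) + r - 1, sect d (fs k) x)"
    using kappa_block[where fs = F, OF _ _ x] fsk kl \<pi>_k by (simp add: wr_entry_def r_def)
  have "\<pi>' (k + x - 1) = \<sigma> k + r - 1" "F' (k + x - 1) = sect d (fs k) x"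
    using kappa_block[where fs = fs and \<sigma> = \<sigma> and n = n, OF fsk kl(1) x] unfolding G'
    by (simp_all add: r_def)
  then have rhs: "wr_entry (kappa d (n + d - 1) (l + d - 1) (\<pi>', F')) (k + x - 1)
      = (clone_pos d (clone_pos d (\<sigma> k) (\<sigma> l)) (\<sigma> k + r - 1), sect d (fs k) x)"
    using kappa_clone_pos[OF d _ _ pos(1,2), of \<pi>' F'] pos(3) \<pi>'_l kl
    by (simp add: wr_entry_def)
  show ?thesis using lhs rhs clone_pos_block_shift[OF d \<sigma>_kl r] G G' by simp
qed

lemma kappa_kappa_at_clone_pos:
  assumes m: "m \<in> {1..n + d - 1}" "m \<noteq> k"
  shows "wr_entry (kappa d (n + d - 1) k (kappa d n l (\<sigma>, fs))) (clone_pos d k m)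
    = wr_entry (kappa d (n + d - 1) (l + d - 1) (kappa d n k (\<sigma>, fs))) (clone_pos d k m)"
proof -
  obtain \<pi> F \<pi>' F' where G: "kappa d n l (\<sigma>, fs) = (\<pi>, F)" and G': "kappa d n k (\<sigma>, fs) = (\<pi>', F')"
    by fastforce
  have \<sigma>: "\<sigma> permutes {1..n}" and fs: "\<And>i. i \<in> {1..n} \<Longrightarrow> is_aut d (fs i)"
    using g by (auto simp: mem_A_iff)
  have \<sigma>_kl: "\<sigma> k \<noteq> \<sigma> l" using kl permutes_inj[OF \<sigma>] by (auto simp: inj_eq)
  have l: "1 \<le> l" "l \<le> n" and l': "1 \<le> l + d - 1" "l + d - 1 \<le> n + d - 1" using kl by auto
  have pos_kl: "clone_pos d l k = k" "clone_pos d k l = l + d - 1" using kl by (auto simp: clone_pos_def)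
  have \<pi>_k: "\<pi> k = clone_pos d (\<sigma> l) (\<sigma> k)"
    and \<pi>'_l: "\<pi>' (l + d - 1) = clone_pos d (\<sigma> k) (\<sigma> l)" "F' (l + d - 1) = fs l"
    using kappa_at_other_cloned_point G G' by (simp_all add: wr_entry_def)
  have "wr_entry (kappa d (n + d - 1) (l + d - 1) (\<pi>', F')) (clone_pos d k m) = (clone_pos d (\<pi> k) (\<pi> m), F m)"
    using d l m(1)
  proof (cases rule: clone_positions_cases)
    case (block y)
    define r where "r = rho_aut d (fs l) y"
    have fsl: "is_aut d (fs l)" using fs l by simp
    have r: "r \<in> {1..d}" using block permutes_in_image[OF rho_aut_permutes[OF fsl]] by (simp add: r_def)
    have "\<pi> m = \<sigma> l + r - 1" "F m = sect d (fs l) y"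
      using kappa_block[where fs = fs and \<sigma> = \<sigma> and n = n, OF fsl l(1) block(1)] block(2)
      unfolding G by (simp_all add: r_def)
    moreover have "clone_pos d k m = (l + d - 1) + y - 1"
      using clone_pos_block_shift[OF d _ block(1), of l k] kl block(2) pos_kl by simp
    ultimately show ?thesis
      using kappa_block[where fs = F', OF _ l'(1) block(1)] fsl \<pi>_k \<pi>'_l
        clone_pos_block_shift[OF d \<sigma>_kl[symmetric] r] by (simp add: wr_entry_def r_def)
  next
    case (clone j)
    have jk: "j \<noteq> k" using clone m(2) pos_kl by auto
    have \<sigma>_j: "\<sigma> j \<noteq> \<sigma> k" "\<sigma> j \<noteq> \<sigma> l"
      using clone(2) jk permutes_inj[OF \<sigma>] by (auto simp: inj_eq)
    have "\<pi> m = clone_pos d (\<sigma> l) (\<sigma> j)" "F m = fs j"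
      using kappa_clone_pos[OF d l clone(1,2), of \<sigma> fs] G clone(3) by simp_all
    moreover have "clone_pos d k m = clone_pos d (l + d - 1) (clone_pos d k j)"
      using clone_pos_swap[of d k l j] d kl jk clone(2,3) pos_kl by auto
    moreover have "clone_pos d k j \<in> {1..n + d - 1}" "clone_pos d k j \<noteq> l + d - 1"
      using clone_pos_in_range[OF d clone(1)] clone_pos_inj[OF d, of k j l] clone(2) pos_kl by auto
    moreover have "\<pi>' (clone_pos d k j) = clone_pos d (\<sigma> k) (\<sigma> j)" "F' (clone_pos d k j) = fs j"
      using kappa_clone_pos[OF d _ _ clone(1) jk, of \<sigma> fs] kl G' by simp_all
    ultimately show ?thesis
      using kappa_clone_pos[OF d l', of "clone_pos d k j" \<pi>' F'] \<pi>_k \<pi>'_l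
        clone_pos_swap[OF d \<sigma>_kl \<sigma>_j(1)[symmetric] \<sigma>_j(2)[symmetric]] by (simp add: wr_entry_def)
  qed
  moreover have "wr_entry (kappa d (n + d - 1) k (\<pi>, F)) (clone_pos d k m) = (clone_pos d (\<pi> k) (\<pi> m), F m)"
    using kappa_clone_pos[OF d _ _ m] kl by (simp add: wr_entry_def)
  ultimately show ?thesis using G G' by simp
qed

lemma kappa_kappa_pair:
  "kappa d (n + d - 1) k (kappa d n l (\<sigma>, fs)) = kappa d (n + d - 1) (l + d - 1) (kappa d n k (\<sigma>, fs))"
proof (rule A_eqI[OF d, of k "n + d - 1"])
  show "kappa d (n + d - 1) k (kappa d n l (\<sigma>, fs)) \<in> A d (n + d - 1 + d - 1)"
    using kappa_in_A[OF d _ _ kappa_in_A[OF d _ _ g]] kl by simp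
  show "kappa d (n + d - 1) (l + d - 1) (kappa d n k (\<sigma>, fs)) \<in> A d (n + d - 1 + d - 1)"
    using kappa_in_A[OF d _ _ kappa_in_A[OF d _ _ g]] kl by simp
qed (use kl kappa_kappa_at_block kappa_kappa_at_clone_pos in auto)

end

lemma kappa_kappa:
  assumes "1 \<le> d" "1 \<le> k" "k < l" "l \<le> n" "g \<in> A d n"
  shows "kappa d (n + d - 1) k (kappa d n l g) = kappa d (n + d - 1) (l + d - 1) (kappa d n k g)"
  using kappa_kappa_pair assms by (cases g) blast

theorem mainTheorem3:
  fixes d :: nat
  assumes "d \<ge> 2"
  shows "(\<forall>n k. 1 \<le> k \<and> k \<le> n \<longrightarrow>
            inj_on (kappa d n k) (A d n) \<and> kappa d n k ` A d n \<subseteq> A d (n + d - 1))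
       \<and> (\<forall>n g h k. g \<in> A d n \<and> h \<in> A d n \<and> 1 \<le> k \<and> k \<le> n \<longrightarrow>
            kappa d n k (wr_mult g h)
              = wr_mult (kappa d n (rho_n h k) g) (kappa d n k h))
       \<and> (\<forall>n g k l. g \<in> A d n \<and> 1 \<le> k \<and> k < l \<and> l \<le> n \<longrightarrow>
            kappa d (n + d - 1) k (kappa d n l g)
              = kappa d (n + d - 1) (l + d - 1) (kappa d n k g))
       \<and> (\<forall>n g k i. g \<in> A d n \<and> 1 \<le> k \<and> k \<le> n \<and> i \<in> {1..n + d - 1}
              \<and> i \<notin> {k..k + d - 1} \<longrightarrow>
            rho_n (kappa d n k g) i = varsigma d n k (rho_n g) i)"
proof -
  have d: "1 \<le> d" using assms by simp
  show ?thesis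
    using kappa_inj_on[OF d] kappa_in_A[OF d] kappa_wr_mult[OF d] kappa_kappa[OF d] rho_n_kappa
    by blast
qed

end
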